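(* Let $\alpha\in(\pi/8,3\pi/8)$ with $\alpha/\pi\notin\mathbb{Q}$, $\beta=\alpha-\pi/2$, $\rho=0.01$, $A_1=\rho R(\alpha)$, $A_2=\rho R(\beta)$ where $R(\theta)=\begin{bmatrix}\cos\theta&-\sin\theta\\ \sin\theta&\cos\theta\end{bmatrix}$, and $c(x)=x_1^2+2x_2^2$ on $\mathbb{R}^2$. Let $J^\star$ be the optimal value function of $\{A_1,A_2\}$ with cost $c$, $\tilde J^\star(\theta)=J^\star([\cos\theta,\sin\theta]^\top)$, $\Delta\tilde J^\star(\theta)=\tilde J^\star(\theta+\alpha)-\tilde J^\star(\theta+\beta)$, $\mu=\pi/4-\alpha$, $\delta=0.01$. Let $\nu\in(\mu-\delta,\mu+\delta)$ satisfy $\Delta\tilde J^\star(\nu)=0$. Then $\tilde J^\star$ is not differentiable at $\nu$.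
   Context: For the switched linear system $\xi(t+1)=A_{\sigma(t)}\xi(t)$ with switching signal $\sigma:\mathbb{N}\to\{1,2\}$, $\xi(t,x,\sigma)$ denotes the solution with $\xi(0)=x$, and $J^\star(x)=\inf_\sigma\sum_{t=0}^\infty c(\xi(t,x,\sigma))$. (Such a $\nu$ exists and is unique in $(\mu-\delta,\mu+\delta)$.) *)

theory Defs
  imports "HOL-Analysis.Analysis"
begin

definition rot :: "real \<Rightarrow> real^2^2" where
  "rot \<theta> = vector [vector [cos \<theta>, - sin \<theta>], vector [sin \<theta>, cos \<theta>]]"

fun sw_traj :: "(nat \<Rightarrow> real^2^2) \<Rightarrow> real^2 \<Rightarrow> (nat \<Rightarrow> nat) \<Rightarrow> nat \<Rightarrow> real^2" where
  "sw_traj A x \<sigma> 0 = x"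
| "sw_traj A x \<sigma> (Suc t) = A (\<sigma> t) *v sw_traj A x \<sigma> t"

definition switching_signals :: "(nat \<Rightarrow> nat) set" where
  "switching_signals = {\<sigma>. \<forall>t. \<sigma> t \<in> {1, 2}}"

definition opt_value :: "(nat \<Rightarrow> real^2^2) \<Rightarrow> (real^2 \<Rightarrow> real) \<Rightarrow> real^2 \<Rightarrow> real" where
  "opt_value A c x = (INF \<sigma>\<in>switching_signals. (\<Sum>t. c (sw_traj A x \<sigma> t)))"

end

(*
  On the unit circle A_i acts as the rotation by theta_i followed by scaling with 0.01, and
  c = 1 + sin^2 there. Hence J~(phi) = inf_sigma sum_t 10^(-4 t) (1 + sin^2 (phi + S_t)), with S_t
  the accumulated angle, and J~(phi) = 1 + sin^2 phi + 10^(-4) min_i J~(phi + theta_i). At nu the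
  two branches of the minimum coincide, so nearly optimal signals may start with either matrix.
  Estimating J~(nu + h) along one starting with A_2 and J~(nu - h) along one starting with A_1
  bounds the second difference J~(nu + h) + J~(nu - h) - 2 J~(nu) by about
  -2 10^(-4) sin (2 (nu + alpha)) h < 0: since theta_2 = theta_1 - pi/2, the first rotation gives
  the two branches the opposite slopes 10^(-4) sin (2 (nu + theta_i)). Differentiability would
  make the second difference o(h).
*)
theory Submission
  imports Defs "HOL-Real_Asymp.Real_Asymp"
begin

lemma differentiable_imp_second_difference_quotient_tendsto_0:
  fixes f :: "real \<Rightarrow> real"
  assumes "f differentiable (at x)"
  shows "((\<lambda>h. (f (x + h) + f (x - h) - 2 * f x) / h) \<longlongrightarrow> 0) (at_right 0)"
proof -
  define g where "g = (\<lambda>h. (f (x + h) - f x) / h)"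
  obtain D where "DERIV f x :> D"
    using assms real_differentiable_def by blast
  then have "(g \<longlongrightarrow> D) (at 0)"
    by (simp add: DERIV_def g_def)
  then have "(g \<longlongrightarrow> D) (at_right 0)" "((\<lambda>h. g (- h)) \<longlongrightarrow> D) (at_right 0)"
    by (simp_all add: filterlim_at_split at_left_minus filterlim_filtermap)
  then have "((\<lambda>h. g h - g (- h)) \<longlongrightarrow> 0) (at_right 0)"
    using tendsto_diff by fastforce
  moreover have "\<forall>\<^sub>F h in at_right 0. g h - g (- h) = (f (x + h) + f (x - h) - 2 * f x) / h"
    by (rule eventually_mono[OF eventually_at_right_less]) (simp add: g_def field_simps)
  ultimately show ?thesis
    by (rule Lim_transform_eventually)
qed

lemma sin_squared_diff: "(sin (x::real))\<^sup>2 - (sin y)\<^sup>2 = sin (x + y) * sin (x - y)"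
proof -
  have "sin (x + y) * sin (x - y) = (sin x)\<^sup>2 * (cos y)\<^sup>2 - (cos x)\<^sup>2 * (sin y)\<^sup>2"
    unfolding sin_add sin_diff by (simp add: power2_eq_square algebra_simps)
  also have "\<dots> = (sin x)\<^sup>2 - (sin y)\<^sup>2"
    by (simp add: cos_squared_eq algebra_simps)
  finally show ?thesis by simp
qed

lemma abs_sin_squared_diff_le: "\<bar>(sin ((x::real) + h))\<^sup>2 - (sin x)\<^sup>2\<bar> \<le> \<bar>h\<bar>"
proof -
  have "\<bar>(sin (x + h))\<^sup>2 - (sin x)\<^sup>2\<bar> = \<bar>sin (x + h + x)\<bar> * \<bar>sin h\<bar>"
    by (simp add: sin_squared_diff abs_mult)
  also have "\<dots> \<le> 1 * \<bar>h\<bar>"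
    by (intro mult_mono abs_sin_x_le_abs_x) auto
  finally show ?thesis by simp
qed

lemma sin_squared_second_difference:
  "((sin ((x::real) + h))\<^sup>2 - (sin x)\<^sup>2) + ((sin (x - h))\<^sup>2 - (sin x)\<^sup>2) = 2 * cos (2 * x) * (sin h)\<^sup>2"
proof -
  have "x + h + x = 2 * x + h" "x + h - x = h" "x - h + x = 2 * x - h" "x - h - x = - h"
    by simp_all
  note sin_squared_diff[of "x + h" x, unfolded this(1,2)] sin_squared_diff[of "x - h" x, unfolded this(3,4)]
  then have "((sin (x + h))\<^sup>2 - (sin x)\<^sup>2) + ((sin (x - h))\<^sup>2 - (sin x)\<^sup>2)
      = (sin (2 * x + h) - sin (2 * x - h)) * sin h"
    by (simp add: algebra_simps)
  also have "\<dots> = 2 * cos (2 * x) * (sin h)\<^sup>2"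
    by (simp add: sin_add sin_diff power2_eq_square)
  finally show ?thesis .
qed

lemma sin_squared_quarter_turn_difference:
  "((sin ((u::real) - pi / 2 + h))\<^sup>2 - (sin (u - pi / 2))\<^sup>2) + ((sin (u - h))\<^sup>2 - (sin u)\<^sup>2)
     = - (sin (2 * h) * sin (2 * u))"
proof -
  have "(sin (y - pi / 2))\<^sup>2 = 1 - (sin y)\<^sup>2" for y
    by (simp add: sin_diff cos_squared_eq)
  then have "((sin (u - pi / 2 + h))\<^sup>2 - (sin (u - pi / 2))\<^sup>2) + ((sin (u - h))\<^sup>2 - (sin u)\<^sup>2)
      = - (sin (2 * u + h) + sin (2 * u - h)) * sin h"
    by (simp add: sin_squared_diff algebra_simps)
  also have "\<dots> = - (sin (2 * h) * sin (2 * u))"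
    unfolding sin_double[of h] by (simp add: sin_add sin_diff algebra_simps)
  finally show ?thesis .
qed

lemma sin_double_ge_near_pi_quarter:
  assumes "\<bar>u - pi / 4\<bar> \<le> \<delta>"
  shows "1 - 2 * \<delta>\<^sup>2 \<le> sin (2 * u)"
proof -
  define w where "w = u - pi / 4"
  have "2 * u = 2 * w + pi / 2"
    by (simp add: w_def)
  then have "sin (2 * u) = 1 - 2 * (sin w)\<^sup>2"
    by (simp add: sin_add cos_double_sin)
  moreover have "(sin w)\<^sup>2 \<le> w\<^sup>2"
    using abs_sin_x_le_abs_x[of w] abs_le_square_iff by blast
  moreover have "w\<^sup>2 \<le> \<delta>\<^sup>2"
    using assms abs_le_square_iff[of w \<delta>] by (simp add: w_def)
  ultimately show ?thesis
    by linarith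
qed

lemma rot_mult_unit_vector:
  "rot a *v vector [cos \<phi>, sin \<phi>] = vector [cos (\<phi> + a), sin (\<phi> + a)]"
  by (simp add: rot_def vec_eq_iff forall_2 matrix_vector_mult_def sum_2 cos_add sin_add algebra_simps)

definition angle_sum :: "(nat \<Rightarrow> real) \<Rightarrow> (nat \<Rightarrow> nat) \<Rightarrow> nat \<Rightarrow> real" where
  "angle_sum \<theta> \<sigma> t = (\<Sum>i<t. \<theta> (\<sigma> i))"

lemma angle_sum_Suc: "angle_sum \<theta> \<sigma> (Suc t) = \<theta> (\<sigma> 0) + angle_sum \<theta> (\<sigma> \<circ> Suc) t"
  unfolding angle_sum_def by (subst sum.lessThan_Suc_shift) simp

lemma sw_traj_scaled_rot:
  "sw_traj (\<lambda>i. r *\<^sub>R rot (\<theta> i)) (vector [cos \<phi>, sin \<phi>]) \<sigma> t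
     = r ^ t *\<^sub>R vector [cos (\<phi> + angle_sum \<theta> \<sigma> t), sin (\<phi> + angle_sum \<theta> \<sigma> t)]"
proof (induction t)
  case 0
  show ?case by (simp add: angle_sum_def)
next
  case (Suc t)
  have "sw_traj (\<lambda>i. r *\<^sub>R rot (\<theta> i)) (vector [cos \<phi>, sin \<phi>]) \<sigma> (Suc t)
      = (r *\<^sub>R rot (\<theta> (\<sigma> t))) *v (r ^ t *\<^sub>R vector [cos (\<phi> + angle_sum \<theta> \<sigma> t), sin (\<phi> + angle_sum \<theta> \<sigma> t)])"
    using Suc by simp
  also have "\<dots> = r ^ Suc t *\<^sub>R (rot (\<theta> (\<sigma> t)) *v vector [cos (\<phi> + angle_sum \<theta> \<sigma> t), sin (\<phi> + angle_sum \<theta> \<sigma> t)])"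
    by (simp add: scaleR_matrix_vector_assoc[symmetric] matrix_vector_mult_scaleR)
  also have "\<dots> = r ^ Suc t *\<^sub>R vector [cos (\<phi> + angle_sum \<theta> \<sigma> (Suc t)), sin (\<phi> + angle_sum \<theta> \<sigma> (Suc t))]"
    by (simp add: rot_mult_unit_vector angle_sum_def algebra_simps)
  finally show ?case .
qed

definition circle_cost :: "real \<Rightarrow> (nat \<Rightarrow> real) \<Rightarrow> (nat \<Rightarrow> nat) \<Rightarrow> real \<Rightarrow> real" where
  "circle_cost q \<theta> \<sigma> \<phi> = (\<Sum>t. q ^ t * (1 + (sin (\<phi> + angle_sum \<theta> \<sigma> t))\<^sup>2))"

definition circle_value :: "real \<Rightarrow> (nat \<Rightarrow> real) \<Rightarrow> real \<Rightarrow> real" where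
  "circle_value q \<theta> \<phi> = (INF \<sigma>\<in>switching_signals. circle_cost q \<theta> \<sigma> \<phi>)"

lemma opt_value_scaled_rot:
  "opt_value (\<lambda>i. r *\<^sub>R rot (\<theta> i)) (\<lambda>x. (x $ 1)\<^sup>2 + 2 * (x $ 2)\<^sup>2) (vector [cos \<phi>, sin \<phi>])
     = circle_value (r\<^sup>2) \<theta> \<phi>"
proof -
  have "(c *\<^sub>R vector [cos \<psi>, sin \<psi>] :: real^2) $ 1 ^ 2 + 2 * (c *\<^sub>R vector [cos \<psi>, sin \<psi>] :: real^2) $ 2 ^ 2
      = c\<^sup>2 * (1 + (sin \<psi>)\<^sup>2)" for c \<psi>
  proof -
    have "c\<^sup>2 * (cos \<psi>)\<^sup>2 + c\<^sup>2 * (sin \<psi>)\<^sup>2 = c\<^sup>2"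
      by (simp flip: distrib_left)
    then show ?thesis by (simp add: algebra_simps)
  qed
  moreover have "(r ^ t)\<^sup>2 = (r\<^sup>2) ^ t" for t :: nat
    by (metis power_mult mult.commute)
  ultimately show ?thesis
    unfolding opt_value_def circle_value_def circle_cost_def sw_traj_scaled_rot by simp
qed

lemma switching_signals_nonempty: "switching_signals \<noteq> {}"
  by (auto simp: switching_signals_def)

lemma switching_signals_Suc: "\<sigma> \<in> switching_signals \<Longrightarrow> \<sigma> \<circ> Suc \<in> switching_signals"
  by (simp add: switching_signals_def)

context
  fixes q :: real
  assumes q_nonneg: "0 \<le> q" and q_less_1: "q < 1"
begin

lemma summable_circle_cost:
  "summable (\<lambda>t. q ^ t * (1 + (sin (\<phi> + angle_sum \<theta> \<sigma> t))\<^sup>2))"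
proof (rule summable_comparison_test')
  show "summable (\<lambda>t. 2 * q ^ t)"
    using q_nonneg q_less_1 by (intro summable_mult summable_geometric) simp
  show "norm (q ^ t * (1 + (sin (\<phi> + angle_sum \<theta> \<sigma> t))\<^sup>2)) \<le> 2 * q ^ t" for t
  proof -
    have "q ^ t * (1 + (sin (\<phi> + angle_sum \<theta> \<sigma> t))\<^sup>2) \<le> q ^ t * 2"
      using q_nonneg abs_square_le_1[of "sin (\<phi> + angle_sum \<theta> \<sigma> t)"]
      by (intro mult_left_mono) auto
    then show ?thesis
      using q_nonneg by (simp add: mult.commute)
  qed
qed

lemma circle_cost_nonneg: "0 \<le> circle_cost q \<theta> \<sigma> \<phi>"
  unfolding circle_cost_def using q_nonneg by (intro suminf_nonneg summable_circle_cost) simp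

lemma circle_cost_unfold:
  "circle_cost q \<theta> \<sigma> \<phi> = 1 + (sin \<phi>)\<^sup>2 + q * circle_cost q \<theta> (\<sigma> \<circ> Suc) (\<phi> + \<theta> (\<sigma> 0))"
proof -
  have "circle_cost q \<theta> \<sigma> \<phi>
      = (\<Sum>t. q ^ Suc t * (1 + (sin (\<phi> + angle_sum \<theta> \<sigma> (Suc t)))\<^sup>2)) + (1 + (sin \<phi>)\<^sup>2)"
    unfolding circle_cost_def by (subst suminf_split_head[OF summable_circle_cost]) (simp add: angle_sum_def)
  also have "(\<Sum>t. q ^ Suc t * (1 + (sin (\<phi> + angle_sum \<theta> \<sigma> (Suc t)))\<^sup>2))
      = q * circle_cost q \<theta> (\<sigma> \<circ> Suc) (\<phi> + \<theta> (\<sigma> 0))"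
    unfolding circle_cost_def by (subst suminf_mult[OF summable_circle_cost, symmetric])
      (simp add: angle_sum_Suc add.assoc mult.assoc)
  finally show ?thesis by simp
qed

lemma circle_cost_lipschitz: "\<bar>circle_cost q \<theta> \<sigma> (\<phi> + h) - circle_cost q \<theta> \<sigma> \<phi>\<bar> \<le> \<bar>h\<bar> / (1 - q)"
proof -
  define d where "d t = q ^ t * ((sin (\<phi> + angle_sum \<theta> \<sigma> t + h))\<^sup>2 - (sin (\<phi> + angle_sum \<theta> \<sigma> t))\<^sup>2)" for t
  have "circle_cost q \<theta> \<sigma> (\<phi> + h) - circle_cost q \<theta> \<sigma> \<phi> = (\<Sum>t. d t)"
    unfolding circle_cost_def d_def
    by (subst suminf_diff[OF summable_circle_cost summable_circle_cost]) (simp add: algebra_simps)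
  moreover have "norm (\<Sum>t. d t) \<le> (\<Sum>t. \<bar>h\<bar> * q ^ t)"
  proof (rule norm_suminf_le)
    show "summable (\<lambda>t. \<bar>h\<bar> * q ^ t)"
      using q_nonneg q_less_1 by (intro summable_mult summable_geometric) simp
    show "norm (d t) \<le> \<bar>h\<bar> * q ^ t" for t
      using mult_left_mono[OF abs_sin_squared_diff_le[of "\<phi> + angle_sum \<theta> \<sigma> t" h] zero_le_power[OF q_nonneg, of t]]
      by (simp add: d_def abs_mult q_nonneg mult.commute)
  qed
  moreover have "(\<Sum>t. \<bar>h\<bar> * q ^ t) = \<bar>h\<bar> / (1 - q)"
    using q_nonneg q_less_1 by (simp add: suminf_mult suminf_geometric)
  ultimately show ?thesis
    by simp
qed

lemma circle_cost_diff_le: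
  "circle_cost q \<theta> \<sigma> (\<phi> + h) - circle_cost q \<theta> \<sigma> \<phi>
     \<le> ((sin (\<phi> + h))\<^sup>2 - (sin \<phi>)\<^sup>2)
       + q * ((sin (\<phi> + \<theta> (\<sigma> 0) + h))\<^sup>2 - (sin (\<phi> + \<theta> (\<sigma> 0)))\<^sup>2)
       + q\<^sup>2 * \<bar>h\<bar> / (1 - q)"
proof -
  define \<psi> where "\<psi> = \<phi> + \<theta> (\<sigma> 0) + \<theta> (\<sigma> 1)"
  define \<tau> where "\<tau> = \<sigma> \<circ> Suc \<circ> Suc"
  have unfold2: "circle_cost q \<theta> \<sigma> (\<phi> + x) = 1 + (sin (\<phi> + x))\<^sup>2
      + q * (1 + (sin (\<phi> + \<theta> (\<sigma> 0) + x))\<^sup>2 + q * circle_cost q \<theta> \<tau> (\<psi> + x))" for x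
    using circle_cost_unfold[of \<theta> \<sigma> "\<phi> + x"] circle_cost_unfold[of \<theta> "\<sigma> \<circ> Suc"]
    by (simp add: \<psi>_def \<tau>_def algebra_simps)
  have "circle_cost q \<theta> \<tau> (\<psi> + h) - circle_cost q \<theta> \<tau> \<psi> \<le> \<bar>h\<bar> / (1 - q)"
    using circle_cost_lipschitz by (metis abs_le_D1)
  from mult_left_mono[OF this zero_le_power2[of q]]
  have "q\<^sup>2 * (circle_cost q \<theta> \<tau> (\<psi> + h) - circle_cost q \<theta> \<tau> \<psi>) \<le> q\<^sup>2 * \<bar>h\<bar> / (1 - q)"
    by simp
  then show ?thesis
    using unfold2[of h] unfold2[of 0] by (simp add: power2_eq_square algebra_simps)
qed

lemma circle_value_le: "\<sigma> \<in> switching_signals \<Longrightarrow> circle_value q \<theta> \<phi> \<le> circle_cost q \<theta> \<sigma> \<phi>"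
  unfolding circle_value_def by (rule cINF_lower) (auto intro: bdd_belowI2 circle_cost_nonneg)

lemma bellman_le_circle_value:
  "1 + (sin \<phi>)\<^sup>2 + q * min (circle_value q \<theta> (\<phi> + \<theta> 1)) (circle_value q \<theta> (\<phi> + \<theta> 2))
     \<le> circle_value q \<theta> \<phi>"
  unfolding circle_value_def[of q \<theta> \<phi>]
proof (rule cINF_greatest)
  show "switching_signals \<noteq> {}"
    by (rule switching_signals_nonempty)
  fix \<sigma> assume \<sigma>: "\<sigma> \<in> switching_signals"
  then have "\<sigma> 0 = 1 \<or> \<sigma> 0 = 2"
    by (simp add: switching_signals_def)
  then have "min (circle_value q \<theta> (\<phi> + \<theta> 1)) (circle_value q \<theta> (\<phi> + \<theta> 2))
      \<le> circle_value q \<theta> (\<phi> + \<theta> (\<sigma> 0))"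
    by auto
  also have "\<dots> \<le> circle_cost q \<theta> (\<sigma> \<circ> Suc) (\<phi> + \<theta> (\<sigma> 0))"
    using \<sigma> by (intro circle_value_le switching_signals_Suc)
  finally show "1 + (sin \<phi>)\<^sup>2 + q * min (circle_value q \<theta> (\<phi> + \<theta> 1)) (circle_value q \<theta> (\<phi> + \<theta> 2))
      \<le> circle_cost q \<theta> \<sigma> \<phi>"
    using q_nonneg circle_cost_unfold[of \<theta> \<sigma> \<phi>] by (simp add: mult_left_mono)
qed

lemma exists_signal_starting_with:
  assumes "i \<in> {1, 2}" and "0 < \<epsilon>"
  obtains \<sigma> where "\<sigma> \<in> switching_signals" "\<sigma> 0 = i"
    "circle_cost q \<theta> \<sigma> \<phi> < 1 + (sin \<phi>)\<^sup>2 + q * circle_value q \<theta> (\<phi> + \<theta> i) + \<epsilon>"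
proof -
  have "circle_value q \<theta> (\<phi> + \<theta> i) < circle_value q \<theta> (\<phi> + \<theta> i) + \<epsilon> / (q + 1)"
    using assms q_nonneg by simp
  then obtain \<tau> where \<tau>: "\<tau> \<in> switching_signals"
    "circle_cost q \<theta> \<tau> (\<phi> + \<theta> i) < circle_value q \<theta> (\<phi> + \<theta> i) + \<epsilon> / (q + 1)"
    unfolding circle_value_def[of q \<theta> "\<phi> + \<theta> i"] using switching_signals_nonempty
    by (subst (asm) cINF_less_iff) (auto intro: bdd_belowI2 circle_cost_nonneg)
  define \<sigma> where "\<sigma> = case_nat i \<tau>"
  show ?thesis
  proof (rule that)
    show "\<sigma> \<in> switching_signals"
      using \<tau>(1) assms(1) by (auto simp: \<sigma>_def switching_signals_def split: nat.split)
    show "\<sigma> 0 = i"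
      by (simp add: \<sigma>_def)
    have "circle_cost q \<theta> \<sigma> \<phi> = 1 + (sin \<phi>)\<^sup>2 + q * circle_cost q \<theta> \<tau> (\<phi> + \<theta> i)"
      using circle_cost_unfold[of \<theta> \<sigma> \<phi>] by (simp add: \<sigma>_def comp_def)
    moreover have "q * circle_cost q \<theta> \<tau> (\<phi> + \<theta> i)
        \<le> q * circle_value q \<theta> (\<phi> + \<theta> i) + q * (\<epsilon> / (q + 1))"
      using mult_left_mono[OF less_imp_le[OF \<tau>(2)] q_nonneg] by (simp add: distrib_left)
    moreover have "q * (\<epsilon> / (q + 1)) < \<epsilon>"
      using assms(2) q_nonneg by (simp add: field_simps)
    ultimately show "circle_cost q \<theta> \<sigma> \<phi> < 1 + (sin \<phi>)\<^sup>2 + q * circle_value q \<theta> (\<phi> + \<theta> i) + \<epsilon>"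
      by linarith
  qed
qed

text \<open>At a switch point both branches of the Bellman inequality are tight, so \<open>\<nu> + h\<close> can
  be estimated along a nearly optimal signal starting with 2 and \<open>\<nu> - h\<close> along one starting
  with 1.\<close>

lemma circle_value_second_difference_le:
  assumes switch_point: "circle_value q \<theta> (\<nu> + \<theta> 1) = circle_value q \<theta> (\<nu> + \<theta> 2)"
  shows "circle_value q \<theta> (\<nu> + h) + circle_value q \<theta> (\<nu> - h) - 2 * circle_value q \<theta> \<nu>
     \<le> ((sin (\<nu> + h))\<^sup>2 - (sin \<nu>)\<^sup>2) + ((sin (\<nu> - h))\<^sup>2 - (sin \<nu>)\<^sup>2)
       + q * (((sin (\<nu> + \<theta> 2 + h))\<^sup>2 - (sin (\<nu> + \<theta> 2))\<^sup>2)
              + ((sin (\<nu> + \<theta> 1 - h))\<^sup>2 - (sin (\<nu> + \<theta> 1))\<^sup>2))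
       + 2 * q\<^sup>2 * \<bar>h\<bar> / (1 - q)"
proof (rule field_le_epsilon)
  fix \<epsilon> :: real assume "0 < \<epsilon>"
  have bellman_1: "1 + (sin \<nu>)\<^sup>2 + q * circle_value q \<theta> (\<nu> + \<theta> 1) \<le> circle_value q \<theta> \<nu>"
    using bellman_le_circle_value[of \<nu> \<theta>] switch_point by simp
  then have bellman_2: "1 + (sin \<nu>)\<^sup>2 + q * circle_value q \<theta> (\<nu> + \<theta> 2) \<le> circle_value q \<theta> \<nu>"
    by (simp only: switch_point)
  obtain \<sigma>\<^sub>1 where \<sigma>\<^sub>1: "\<sigma>\<^sub>1 \<in> switching_signals" "\<sigma>\<^sub>1 0 = 1"
    "circle_cost q \<theta> \<sigma>\<^sub>1 \<nu> < 1 + (sin \<nu>)\<^sup>2 + q * circle_value q \<theta> (\<nu> + \<theta> 1) + \<epsilon> / 2"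
    by (rule exists_signal_starting_with[of 1 "\<epsilon> / 2"]) (use \<open>0 < \<epsilon>\<close> in simp_all)
  obtain \<sigma>\<^sub>2 where \<sigma>\<^sub>2: "\<sigma>\<^sub>2 \<in> switching_signals" "\<sigma>\<^sub>2 0 = 2"
    "circle_cost q \<theta> \<sigma>\<^sub>2 \<nu> < 1 + (sin \<nu>)\<^sup>2 + q * circle_value q \<theta> (\<nu> + \<theta> 2) + \<epsilon> / 2"
    by (rule exists_signal_starting_with[of 2 "\<epsilon> / 2"]) (use \<open>0 < \<epsilon>\<close> in simp_all)
  show "circle_value q \<theta> (\<nu> + h) + circle_value q \<theta> (\<nu> - h) - 2 * circle_value q \<theta> \<nu>
     \<le> ((sin (\<nu> + h))\<^sup>2 - (sin \<nu>)\<^sup>2) + ((sin (\<nu> - h))\<^sup>2 - (sin \<nu>)\<^sup>2)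
       + q * (((sin (\<nu> + \<theta> 2 + h))\<^sup>2 - (sin (\<nu> + \<theta> 2))\<^sup>2)
              + ((sin (\<nu> + \<theta> 1 - h))\<^sup>2 - (sin (\<nu> + \<theta> 1))\<^sup>2))
       + 2 * q\<^sup>2 * \<bar>h\<bar> / (1 - q) + \<epsilon>"
  proof -
    have "circle_value q \<theta> (\<nu> + h) + circle_value q \<theta> (\<nu> - h) - 2 * circle_value q \<theta> \<nu>
        \<le> (circle_cost q \<theta> \<sigma>\<^sub>2 (\<nu> + h) - circle_cost q \<theta> \<sigma>\<^sub>2 \<nu>)
          + (circle_cost q \<theta> \<sigma>\<^sub>1 (\<nu> - h) - circle_cost q \<theta> \<sigma>\<^sub>1 \<nu>) + \<epsilon>"
      using circle_value_le[OF \<sigma>\<^sub>2(1), of \<theta> "\<nu> + h"] circle_value_le[OF \<sigma>\<^sub>1(1), of \<theta> "\<nu> - h"]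
        \<sigma>\<^sub>1(3) \<sigma>\<^sub>2(3) bellman_1 bellman_2 by linarith
    also have "\<dots> \<le> (((sin (\<nu> + h))\<^sup>2 - (sin \<nu>)\<^sup>2)
            + q * ((sin (\<nu> + \<theta> 2 + h))\<^sup>2 - (sin (\<nu> + \<theta> 2))\<^sup>2) + q\<^sup>2 * \<bar>h\<bar> / (1 - q))
          + (((sin (\<nu> - h))\<^sup>2 - (sin \<nu>)\<^sup>2)
            + q * ((sin (\<nu> + \<theta> 1 - h))\<^sup>2 - (sin (\<nu> + \<theta> 1))\<^sup>2) + q\<^sup>2 * \<bar>h\<bar> / (1 - q)) + \<epsilon>"
      using circle_cost_diff_le[of \<theta> \<sigma>\<^sub>2 \<nu> h] circle_cost_diff_le[of \<theta> \<sigma>\<^sub>1 \<nu> "- h"] \<sigma>\<^sub>1(2) \<sigma>\<^sub>2(2)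
      by (intro add_right_mono add_mono) simp_all
    also have "\<dots> = ((sin (\<nu> + h))\<^sup>2 - (sin \<nu>)\<^sup>2) + ((sin (\<nu> - h))\<^sup>2 - (sin \<nu>)\<^sup>2)
       + q * (((sin (\<nu> + \<theta> 2 + h))\<^sup>2 - (sin (\<nu> + \<theta> 2))\<^sup>2)
              + ((sin (\<nu> + \<theta> 1 - h))\<^sup>2 - (sin (\<nu> + \<theta> 1))\<^sup>2))
       + 2 * q\<^sup>2 * \<bar>h\<bar> / (1 - q) + \<epsilon>"
      by (simp add: distrib_left add_divide_distrib[symmetric])
    finally show ?thesis .
  qed
qed

lemma quarter_turn_circle_value_second_difference_le:
  assumes quarter_turn: "\<theta> 2 = \<theta> 1 - pi / 2"
    and switch_point: "circle_value q \<theta> (\<nu> + \<theta> 1) = circle_value q \<theta> (\<nu> + \<theta> 2)"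
  shows "circle_value q \<theta> (\<nu> + h) + circle_value q \<theta> (\<nu> - h) - 2 * circle_value q \<theta> \<nu>
     \<le> 2 * h\<^sup>2 - q * sin (2 * h) * sin (2 * (\<nu> + \<theta> 1)) + 2 * q\<^sup>2 * \<bar>h\<bar> / (1 - q)"
proof -
  have "2 * cos (2 * \<nu>) * (sin h)\<^sup>2 \<le> 2 * 1 * h\<^sup>2"
    using abs_sin_x_le_abs_x[of h] by (intro mult_left_mono mult_mono) (auto simp: abs_le_square_iff)
  then have first_turn: "((sin (\<nu> + h))\<^sup>2 - (sin \<nu>)\<^sup>2) + ((sin (\<nu> - h))\<^sup>2 - (sin \<nu>)\<^sup>2) \<le> 2 * h\<^sup>2"
    by (simp only: sin_squared_second_difference)
  have "((sin (\<nu> + \<theta> 2 + h))\<^sup>2 - (sin (\<nu> + \<theta> 2))\<^sup>2)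
      + ((sin (\<nu> + \<theta> 1 - h))\<^sup>2 - (sin (\<nu> + \<theta> 1))\<^sup>2) = - (sin (2 * h) * sin (2 * (\<nu> + \<theta> 1)))"
    using sin_squared_quarter_turn_difference[of "\<nu> + \<theta> 1" h] by (simp add: quarter_turn algebra_simps)
  then have second_turn: "q * (((sin (\<nu> + \<theta> 2 + h))\<^sup>2 - (sin (\<nu> + \<theta> 2))\<^sup>2)
      + ((sin (\<nu> + \<theta> 1 - h))\<^sup>2 - (sin (\<nu> + \<theta> 1))\<^sup>2)) = - q * sin (2 * h) * sin (2 * (\<nu> + \<theta> 1))"
    by (simp only: mult_minus_right mult.assoc)
  note circle_value_second_difference_le[OF switch_point, of h]
  also have "((sin (\<nu> + h))\<^sup>2 - (sin \<nu>)\<^sup>2) + ((sin (\<nu> - h))\<^sup>2 - (sin \<nu>)\<^sup>2)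
       + q * (((sin (\<nu> + \<theta> 2 + h))\<^sup>2 - (sin (\<nu> + \<theta> 2))\<^sup>2)
              + ((sin (\<nu> + \<theta> 1 - h))\<^sup>2 - (sin (\<nu> + \<theta> 1))\<^sup>2))
       + 2 * q\<^sup>2 * \<bar>h\<bar> / (1 - q)
     \<le> 2 * h\<^sup>2 + - q * sin (2 * h) * sin (2 * (\<nu> + \<theta> 1)) + 2 * q\<^sup>2 * \<bar>h\<bar> / (1 - q)"
    unfolding second_turn using first_turn by (intro add_right_mono)
  finally show ?thesis
    by simp
qed

lemma quarter_turn_circle_value_second_difference_quotient_le:
  assumes quarter_turn: "\<theta> 2 = \<theta> 1 - pi / 2"
    and switch_point: "circle_value q \<theta> (\<nu> + \<theta> 1) = circle_value q \<theta> (\<nu> + \<theta> 2)"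
    and near_quarter: "\<bar>\<nu> + \<theta> 1 - pi / 4\<bar> \<le> 1 / 100"
    and h: "0 < h" "h < 1"
  shows "(circle_value q \<theta> (\<nu> + h) + circle_value q \<theta> (\<nu> - h) - 2 * circle_value q \<theta> \<nu>) / h
     \<le> 2 * h - 9 / 10 * q * (sin (2 * h) / h) + 2 * q\<^sup>2 / (1 - q)"
proof -
  have "9 / 10 \<le> sin (2 * (\<nu> + \<theta> 1))"
    using sin_double_ge_near_pi_quarter[OF near_quarter] by (simp add: power2_eq_square)
  moreover have "0 \<le> q * sin (2 * h)"
    using h pi_gt3 q_nonneg by (intro mult_nonneg_nonneg sin_ge_zero) auto
  ultimately have "q * sin (2 * h) * (9 / 10) \<le> q * sin (2 * h) * sin (2 * (\<nu> + \<theta> 1))"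
    by (rule mult_left_mono)
  moreover have "\<bar>h\<bar> = h"
    using h(1) by simp
  moreover note quarter_turn_circle_value_second_difference_le[OF quarter_turn switch_point, of h]
  ultimately have "circle_value q \<theta> (\<nu> + h) + circle_value q \<theta> (\<nu> - h) - 2 * circle_value q \<theta> \<nu>
      \<le> 2 * h\<^sup>2 - 9 / 10 * q * sin (2 * h) + 2 * q\<^sup>2 * h / (1 - q)"
    by simp
  also have "\<dots> = (2 * h - 9 / 10 * q * (sin (2 * h) / h) + 2 * q\<^sup>2 / (1 - q)) * h"
    using h(1) q_less_1 by (simp add: field_simps power2_eq_square)
  finally show ?thesis
    using h(1) by (simp add: pos_divide_le_eq)
qed

lemma quarter_turn_circle_value_not_differentiable:
  assumes "0 < q" "q \<le> 1 / 4"
    and quarter_turn: "\<theta> 2 = \<theta> 1 - pi / 2"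
    and switch_point: "circle_value q \<theta> (\<nu> + \<theta> 1) = circle_value q \<theta> (\<nu> + \<theta> 2)"
    and near_quarter: "\<bar>\<nu> + \<theta> 1 - pi / 4\<bar> \<le> 1 / 100"
  shows "\<not> circle_value q \<theta> differentiable (at \<nu>)"
proof
  assume "circle_value q \<theta> differentiable (at \<nu>)"
  then have quotient_limit: "((\<lambda>h. (circle_value q \<theta> (\<nu> + h) + circle_value q \<theta> (\<nu> - h)
      - 2 * circle_value q \<theta> \<nu>) / h) \<longlongrightarrow> 0) (at_right 0)"
    by (rule differentiable_imp_second_difference_quotient_tendsto_0)
  have "((\<lambda>h. 2 * h - 9 / 10 * q * (sin (2 * h) / h)) \<longlongrightarrow> - 9 / 5 * q) (at_right 0)"
    by real_asymp
  then have bound_limit: "((\<lambda>h. 2 * h - 9 / 10 * q * (sin (2 * h) / h) + 2 * q\<^sup>2 / (1 - q))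
      \<longlongrightarrow> - 9 / 5 * q + 2 * q\<^sup>2 / (1 - q)) (at_right 0)"
    by (intro tendsto_add tendsto_const)
  have "\<forall>\<^sub>F h in at_right 0. (circle_value q \<theta> (\<nu> + h) + circle_value q \<theta> (\<nu> - h)
      - 2 * circle_value q \<theta> \<nu>) / h \<le> 2 * h - 9 / 10 * q * (sin (2 * h) / h) + 2 * q\<^sup>2 / (1 - q)"
  proof (rule eventually_mono[OF eventually_at_right_real[OF zero_less_one]])
    fix h :: real assume "h \<in> {0<..<1}"
    then show "(circle_value q \<theta> (\<nu> + h) + circle_value q \<theta> (\<nu> - h) - 2 * circle_value q \<theta> \<nu>) / h
        \<le> 2 * h - 9 / 10 * q * (sin (2 * h) / h) + 2 * q\<^sup>2 / (1 - q)"
      using quarter_turn_circle_value_second_difference_quotient_le[OF quarter_turn switch_point near_quarter] by simp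
  qed
  with bound_limit quotient_limit have "0 \<le> - 9 / 5 * q + 2 * q\<^sup>2 / (1 - q)"
    by (rule tendsto_le[OF trivial_limit_at_right_real])
  moreover have "- 9 / 5 * q + 2 * q\<^sup>2 / (1 - q) < 0"
    using assms(1,2) by (simp add: field_simps power2_eq_square)
  ultimately show False
    by linarith
qed

end

theorem lemma8:
  fixes \<alpha> \<nu> :: real
  assumes "pi / 8 < \<alpha>" and "\<alpha> < 3 * pi / 8"
    and "\<alpha> / pi \<notin> \<rat>"
    and "\<nu> \<in> {(pi / 4 - \<alpha>) - 0.01 <..< (pi / 4 - \<alpha>) + 0.01}"
    and "(\<lambda>\<theta>. opt_value (\<lambda>i. if i = 1 then 0.01 *\<^sub>R rot \<alpha> else 0.01 *\<^sub>R rot (\<alpha> - pi / 2))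
                 (\<lambda>x. (x $ 1)\<^sup>2 + 2 * (x $ 2)\<^sup>2) (vector [cos \<theta>, sin \<theta>])) (\<nu> + \<alpha>)
         - (\<lambda>\<theta>. opt_value (\<lambda>i. if i = 1 then 0.01 *\<^sub>R rot \<alpha> else 0.01 *\<^sub>R rot (\<alpha> - pi / 2))
                 (\<lambda>x. (x $ 1)\<^sup>2 + 2 * (x $ 2)\<^sup>2) (vector [cos \<theta>, sin \<theta>])) (\<nu> + (\<alpha> - pi / 2)) = 0"
  shows "\<not> (\<lambda>\<theta>. opt_value (\<lambda>i. if i = 1 then 0.01 *\<^sub>R rot \<alpha> else 0.01 *\<^sub>R rot (\<alpha> - pi / 2))
                 (\<lambda>x. (x $ 1)\<^sup>2 + 2 * (x $ 2)\<^sup>2) (vector [cos \<theta>, sin \<theta>])) differentiable (at \<nu>)"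
proof -
  \<comment> \<open>Only the position of \<open>\<nu>\<close> matters.\<close>
  define \<theta> :: "nat \<Rightarrow> real" where "\<theta> = (\<lambda>i. if i = 1 then \<alpha> else \<alpha> - pi / 2)"
  have "(\<lambda>i. if i = 1 then 0.01 *\<^sub>R rot \<alpha> else 0.01 *\<^sub>R rot (\<alpha> - pi / 2)) = (\<lambda>i. 0.01 *\<^sub>R rot (\<theta> i))"
    by (auto simp: \<theta>_def)
  then have value_eq: "opt_value (\<lambda>i. if i = 1 then 0.01 *\<^sub>R rot \<alpha> else 0.01 *\<^sub>R rot (\<alpha> - pi / 2))
                 (\<lambda>x. (x $ 1)\<^sup>2 + 2 * (x $ 2)\<^sup>2) (vector [cos \<phi>, sin \<phi>]) = circle_value (1 / 10000) \<theta> \<phi>" for \<phi>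
    by (simp only: opt_value_scaled_rot) (simp add: power2_eq_square)
  have "circle_value (1 / 10000) \<theta> (\<nu> + \<alpha>) - circle_value (1 / 10000) \<theta> (\<nu> + (\<alpha> - pi / 2)) = 0"
    using assms(5) by (simp only: value_eq)
  moreover have "\<bar>\<nu> + \<theta> 1 - pi / 4\<bar> \<le> 1 / 100"
    using assms(4) unfolding \<theta>_def abs_le_iff by auto
  ultimately have "\<not> circle_value (1 / 10000) \<theta> differentiable (at \<nu>)"
    by (intro quarter_turn_circle_value_not_differentiable) (simp_all add: \<theta>_def)
  then show ?thesis
    by (simp only: value_eq not_False_eq_True)
qed

end
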